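(* Let $L$ be a finite-dimensional Lie algebra over a field $K$ of characteristic $\neq 2$. The following are equivalent: (i) $L$ has an idempotent Hom-Lie structure $\varphi$ (i.e. $\varphi^2=\varphi$) which is different from the zero map and from the identity map; (ii) $L$ decomposes as a direct sum of vector spaces $L = A \oplus B$ with $A \neq 0$, $B \neq 0$, $[[A,A],B] = 0$ and $[[B,B],A] = 0$.
   Context: A Hom-Lie structure on a Lie algebra $L$ is a linear map $\varphi: L \to L$ satisfying $[[x,y],\varphi(z)] + [[z,x],\varphi(y)] + [[y,z],\varphi(x)] = 0$ for all $x,y,z \in L$. *)

theory Defs
  imports Main "HOL.Vector_Spaces"
begin

definition lie_algebra :: "('k::field \<Rightarrow> 'v::ab_group_add \<Rightarrow> 'v) \<Rightarrow> ('v \<Rightarrow> 'v \<Rightarrow> 'v) \<Rightarrow> bool" where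
  "lie_algebra scale br \<longleftrightarrow>
     vector_space scale \<and>
     (\<forall>x. Vector_Spaces.linear scale scale (br x)) \<and>
     (\<forall>y. Vector_Spaces.linear scale scale (\<lambda>x. br x y)) \<and>
     (\<forall>x. br x x = 0) \<and>
     (\<forall>x y z. br x (br y z) + br y (br z x) + br z (br x y) = 0)"

definition finite_dim :: "('k::field \<Rightarrow> 'v::ab_group_add \<Rightarrow> 'v) \<Rightarrow> bool" where
  "finite_dim scale \<longleftrightarrow> (\<exists>S. finite S \<and> module.span scale S = UNIV)"

definition hom_lie_structure ::
  "('k::field \<Rightarrow> 'v::ab_group_add \<Rightarrow> 'v) \<Rightarrow> ('v \<Rightarrow> 'v \<Rightarrow> 'v) \<Rightarrow> ('v \<Rightarrow> 'v) \<Rightarrow> bool" where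
  "hom_lie_structure scale br \<phi> \<longleftrightarrow>
     Vector_Spaces.linear scale scale \<phi> \<and>
     (\<forall>x y z. br (br x y) (\<phi> z) + br (br z x) (\<phi> y) + br (br y z) (\<phi> x) = 0)"

definition lie_bracket_set ::
  "('k::field \<Rightarrow> 'v::ab_group_add \<Rightarrow> 'v) \<Rightarrow> ('v \<Rightarrow> 'v \<Rightarrow> 'v) \<Rightarrow> 'v set \<Rightarrow> 'v set \<Rightarrow> 'v set" where
  "lie_bracket_set scale br X Y = module.span scale {br x y | x y. x \<in> X \<and> y \<in> Y}"

end

theory Submission
  imports Defs
begin

(*
  An idempotent linear map \<phi> is the projection onto A = {x. \<phi> x = x} along
  B = {x. \<phi> x = 0}, and every splitting L = A \<oplus> B arises from such a
  projection; \<phi> = 0 and \<phi> = id correspond to A = 0 and B = 0.  For such a projection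
  the Hom-Lie expression is trilinear and invariant under cyclic rotation of (x, y, z), so
  it vanishes iff it vanishes on the patterns AAA, BBB, AAB and BBA.  On AAA it is the
  Jacobi identity, on BBB it is 0, on BBA it is [[x,y],z], and on AAB the Jacobi identity
  turns it into -[[x,y],z].
*)

context vector_space
begin

definition complementary_subspaces :: "'b set \<Rightarrow> 'b set \<Rightarrow> bool" where
  "complementary_subspaces A B \<longleftrightarrow>
     subspace A \<and> subspace B \<and> A \<inter> B = {0} \<and> (\<forall>v. \<exists>a\<in>A. \<exists>b\<in>B. v = a + b)"

lemma span_eq_zero_iff: "span S = {0} \<longleftrightarrow> S \<subseteq> {0}"
  by (metis span_empty span_insert_0 span_superset subset_singleton_iff)

lemma complementary_subspaces_component_unique:
  assumes "complementary_subspaces A B"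
    and "a \<in> A" "a' \<in> A" "v - a \<in> B" "v - a' \<in> B"
  shows "a = a'"
proof -
  have "a - a' \<in> A"
    using assms by (simp add: complementary_subspaces_def subspace_diff)
  moreover have "a - a' \<in> B"
    using assms subspace_diff[of B "v - a'" "v - a"] by (simp add: complementary_subspaces_def)
  ultimately show ?thesis
    using assms(1) unfolding complementary_subspaces_def by (metis IntI eq_iff_diff_eq_0 singletonD)
qed

lemma complementary_subspaces_fixed_points_kernel:
  fixes f :: "'b \<Rightarrow> 'b"
  assumes "Vector_Spaces.linear scale scale f" "f \<circ> f = f"
  shows "complementary_subspaces {x. f x = x} {x. f x = 0}"
proof -
  interpret linear scale scale f by fact
  have idem: "f (f v) = f v" for v
    using assms(2) by (metis comp_apply)
  have "subspace {x. f x = x}"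
    unfolding subspace_def by (simp add: add scale zero)
  moreover have "subspace {x. f x = 0}"
    by (rule subspace_kernel)
  moreover have "{x. f x = x} \<inter> {x. f x = 0} = {0}"
    using zero by auto
  moreover have "\<exists>a\<in>{x. f x = x}. \<exists>b\<in>{x. f x = 0}. v = a + b" for v
    by (intro bexI[of _ "f v"] bexI[of _ "v - f v"]) (simp_all add: diff idem)
  ultimately show ?thesis
    unfolding complementary_subspaces_def by blast
qed

lemma complementary_subspaces_projection:
  assumes "complementary_subspaces A B"
  obtains p where "Vector_Spaces.linear scale scale p" "p \<circ> p = p" "{x. p x = x} = A" "{x. p x = 0} = B"
proof
  define p where "p v = (THE a. a \<in> A \<and> v - a \<in> B)" for v
  have sA: "subspace A" and sB: "subspace B"
    using assms by (simp_all add: complementary_subspaces_def)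
  have p_eqI: "p v = a" if "a \<in> A" "v - a \<in> B" for v a
    unfolding p_def
    by (rule the_equality) (use that complementary_subspaces_component_unique[OF assms] in blast)+
  have p_mem: "p v \<in> A" "v - p v \<in> B" for v
  proof -
    obtain a b where "a \<in> A" "b \<in> B" "v = a + b"
      using assms unfolding complementary_subspaces_def by blast
    then have "p v = a" by (intro p_eqI) simp_all
    then show "p v \<in> A" "v - p v \<in> B"
      using \<open>a \<in> A\<close> \<open>b \<in> B\<close> \<open>v = a + b\<close> by simp_all
  qed
  have "p (u + v) = p u + p v" for u v
    using p_mem[of u] p_mem[of v] subspace_add[OF sB, of "u - p u" "v - p v"]
    by (intro p_eqI) (simp_all add: sA subspace_add algebra_simps)
  moreover have "p (c *s v) = c *s p v" for c v
    using p_mem[of v]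
    by (intro p_eqI) (simp_all add: sA sB subspace_scale flip: scale_right_diff_distrib)
  ultimately show "Vector_Spaces.linear scale scale p"
    by (simp add: linear_iff vector_space_axioms)
  show "p \<circ> p = p"
    using p_eqI[OF p_mem(1)] by (simp add: fun_eq_iff sB subspace_0)
  show "{x. p x = x} = A"
    using p_mem(1) by (auto intro: p_eqI simp: sB subspace_0) metis
  show "{x. p x = 0} = B"
    using p_mem(2) by (auto intro: p_eqI simp: sA subspace_0) (metis diff_zero)
qed

lemma fixed_points_eq_zero_iff:
  fixes f :: "'b \<Rightarrow> 'b"
  assumes "f \<circ> f = f"
  shows "{x. f x = x} = {0} \<longleftrightarrow> f = (\<lambda>x. 0)"
  using assms by (auto simp: fun_eq_iff)

lemma kernel_eq_zero_iff_id:
  fixes f :: "'b \<Rightarrow> 'b"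
  assumes "Vector_Spaces.linear scale scale f" "f \<circ> f = f"
  shows "{x. f x = 0} = {0} \<longleftrightarrow> f = id"
proof
  interpret linear scale scale f by fact
  assume ker: "{x. f x = 0} = {0}"
  have "f (x - f x) = 0" for x
    using assms(2) by (metis comp_apply diff_self diff)
  then have "x - f x = 0" for x
    using ker by blast
  then show "f = id"
    by (simp add: fun_eq_iff)
qed simp

end

locale lie_alg =
  fixes scale :: "'k::field \<Rightarrow> 'v::ab_group_add \<Rightarrow> 'v"
    and br :: "'v \<Rightarrow> 'v \<Rightarrow> 'v"
  assumes lie_algebra: "lie_algebra scale br"
begin

sublocale vector_space scale
  using lie_algebra by (simp add: lie_algebra_def)

lemma bracket_add_left: "br (x + y) z = br x z + br y z"
  and bracket_scale_left: "br (scale c x) z = scale c (br x z)"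
  and bracket_add_right: "br z (x + y) = br z x + br z y"
  using lie_algebra by (simp_all add: lie_algebra_def linear_iff)

lemma bracket_zero_left [simp]: "br 0 z = 0"
  using bracket_add_left[of 0 0 z] by simp

lemma bracket_zero_right [simp]: "br z 0 = 0"
  using bracket_add_right[of z 0 0] by simp

lemma bracket_self [simp]: "br x x = 0"
  and jacobi_identity: "br x (br y z) + br y (br z x) + br z (br x y) = 0"
  using lie_algebra by (simp_all add: lie_algebra_def)

lemma bracket_antisym: "br y x = - br x y"
proof -
  have "0 = br (x + y) (x + y)"
    by simp
  also have "\<dots> = br x y + br y x"
    unfolding bracket_add_left bracket_add_right by simp
  finally show ?thesis
    by (simp add: eq_neg_iff_add_eq_0 add.commute)
qed

lemma jacobi: "br (br x y) z + br (br y z) x + br (br z x) y = 0"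
proof -
  have "br (br x y) z + br (br y z) x + br (br z x) y
      = - (br x (br y z) + br y (br z x) + br z (br x y))"
    using bracket_antisym[of "br x y" z] bracket_antisym[of "br y z" x]
      bracket_antisym[of "br z x" y] by simp
  then show ?thesis
    by (simp add: jacobi_identity)
qed

lemma subspace_bracket_annihilator: "subspace {u. \<forall>z\<in>Z. br u z = 0}"
  unfolding subspace_def by (simp add: bracket_add_left bracket_scale_left)

lemma lie_bracket_set_bracket_eq_zero_iff:
  "lie_bracket_set scale br (lie_bracket_set scale br X Y) Z = {0} \<longleftrightarrow>
     (\<forall>x\<in>X. \<forall>y\<in>Y. \<forall>z\<in>Z. br (br x y) z = 0)"
proof -
  let ?XY = "lie_bracket_set scale br X Y"
  have "?XY \<subseteq> {u. \<forall>z\<in>Z. br u z = 0} \<longleftrightarrow> (\<forall>x\<in>X. \<forall>y\<in>Y. \<forall>z\<in>Z. br (br x y) z = 0)"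
  proof
    assume "?XY \<subseteq> {u. \<forall>z\<in>Z. br u z = 0}"
    moreover have "br x y \<in> ?XY" if "x \<in> X" "y \<in> Y" for x y
      unfolding lie_bracket_set_def using that by (intro span_base) blast
    ultimately show "\<forall>x\<in>X. \<forall>y\<in>Y. \<forall>z\<in>Z. br (br x y) z = 0"
      by blast
  next
    assume "\<forall>x\<in>X. \<forall>y\<in>Y. \<forall>z\<in>Z. br (br x y) z = 0"
    then have "{br x y | x y. x \<in> X \<and> y \<in> Y} \<subseteq> {u. \<forall>z\<in>Z. br u z = 0}"
      by blast
    then show "?XY \<subseteq> {u. \<forall>z\<in>Z. br u z = 0}"
      unfolding lie_bracket_set_def by (rule span_minimal[OF _ subspace_bracket_annihilator])
  qed
  moreover have "lie_bracket_set scale br ?XY Z = {0} \<longleftrightarrow> ?XY \<subseteq> {u. \<forall>z\<in>Z. br u z = 0}"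
    unfolding lie_bracket_set_def[of _ _ ?XY] span_eq_zero_iff by blast
  ultimately show ?thesis
    by simp
qed

definition hom_lie_form :: "('v \<Rightarrow> 'v) \<Rightarrow> 'v \<Rightarrow> 'v \<Rightarrow> 'v \<Rightarrow> 'v" where
  "hom_lie_form \<phi> x y z = br (br x y) (\<phi> z) + br (br z x) (\<phi> y) + br (br y z) (\<phi> x)"

lemma hom_lie_structure_iff_form:
  "hom_lie_structure scale br \<phi> \<longleftrightarrow>
     Vector_Spaces.linear scale scale \<phi> \<and> (\<forall>x y z. hom_lie_form \<phi> x y z = 0)"
  by (simp add: hom_lie_structure_def hom_lie_form_def)

lemma hom_lie_form_rotate: "hom_lie_form \<phi> x y z = hom_lie_form \<phi> y z x"
  by (simp add: hom_lie_form_def algebra_simps)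

lemma hom_lie_form_add:
  assumes "Vector_Spaces.linear scale scale \<phi>"
  shows "hom_lie_form \<phi> (x + x') y z = hom_lie_form \<phi> x y z + hom_lie_form \<phi> x' y z"
    and "hom_lie_form \<phi> x (y + y') z = hom_lie_form \<phi> x y z + hom_lie_form \<phi> x y' z"
    and "hom_lie_form \<phi> x y (z + z') = hom_lie_form \<phi> x y z + hom_lie_form \<phi> x y z'"
  using assms unfolding linear_iff
  by (simp_all add: hom_lie_form_def bracket_add_left bracket_add_right algebra_simps)

lemma hom_lie_form_eq_0_if_eq_0_on_summands:
  assumes "Vector_Spaces.linear scale scale \<phi>"
    and "\<forall>v. \<exists>a\<in>A. \<exists>b\<in>B. v = a + b"
    and "\<And>x y z. x \<in> A \<union> B \<Longrightarrow> y \<in> A \<union> B \<Longrightarrow> z \<in> A \<union> B \<Longrightarrow> hom_lie_form \<phi> x y z = 0"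
  shows "hom_lie_form \<phi> x y z = 0"
proof -
  obtain a1 b1 a2 b2 a3 b3 where
    "a1 \<in> A" "a2 \<in> A" "a3 \<in> A" "b1 \<in> B" "b2 \<in> B" "b3 \<in> B"
    "x = a1 + b1" "y = a2 + b2" "z = a3 + b3"
    using assms(2) by metis
  then show ?thesis
    by (simp add: hom_lie_form_add[OF assms(1)] assms(3))
qed

lemma hom_lie_structure_idempotent_iff:
  assumes lin: "Vector_Spaces.linear scale scale \<phi>" and idem: "\<phi> \<circ> \<phi> = \<phi>"
  defines "A \<equiv> {x. \<phi> x = x}" and "B \<equiv> {x. \<phi> x = 0}"
  shows "hom_lie_structure scale br \<phi> \<longleftrightarrow>
     (\<forall>x\<in>A. \<forall>y\<in>A. \<forall>z\<in>B. br (br x y) z = 0) \<and> (\<forall>x\<in>B. \<forall>y\<in>B. \<forall>z\<in>A. br (br x y) z = 0)"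
proof -
  have form_AAA: "hom_lie_form \<phi> x y z = 0" if "x \<in> A" "y \<in> A" "z \<in> A" for x y z
    using that jacobi[of x y z] by (simp add: A_def hom_lie_form_def algebra_simps)
  have form_BBB: "hom_lie_form \<phi> x y z = 0" if "x \<in> B" "y \<in> B" "z \<in> B" for x y z
    using that by (simp add: B_def hom_lie_form_def)
  have form_AAB: "hom_lie_form \<phi> x y z = - br (br x y) z" if "x \<in> A" "y \<in> A" "z \<in> B" for x y z
    using that jacobi[of x y z] by (simp add: A_def B_def hom_lie_form_def eq_neg_iff_add_eq_0 algebra_simps)
  have form_BBA: "hom_lie_form \<phi> x y z = br (br x y) z" if "x \<in> B" "y \<in> B" "z \<in> A" for x y z
    using that by (simp add: A_def B_def hom_lie_form_def)
  show ?thesis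
  proof
    assume "hom_lie_structure scale br \<phi>"
    then show "(\<forall>x\<in>A. \<forall>y\<in>A. \<forall>z\<in>B. br (br x y) z = 0) \<and> (\<forall>x\<in>B. \<forall>y\<in>B. \<forall>z\<in>A. br (br x y) z = 0)"
      using form_AAB form_BBA by (simp add: hom_lie_structure_iff_form)
  next
    assume brackets: "(\<forall>x\<in>A. \<forall>y\<in>A. \<forall>z\<in>B. br (br x y) z = 0) \<and> (\<forall>x\<in>B. \<forall>y\<in>B. \<forall>z\<in>A. br (br x y) z = 0)"
    \<comment> \<open>up to rotation, every triple from A \<union> B has one of the four patterns above\<close>
    have "hom_lie_form \<phi> x y z = 0 \<and> hom_lie_form \<phi> y z x = 0 \<and> hom_lie_form \<phi> z x y = 0"
      if "x \<in> A \<and> y \<in> A \<and> z \<in> A \<or> x \<in> B \<and> y \<in> B \<and> z \<in> B \<or>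
          x \<in> A \<and> y \<in> A \<and> z \<in> B \<or> x \<in> B \<and> y \<in> B \<and> z \<in> A" for x y z
      using that brackets form_AAA form_BBB form_AAB form_BBA hom_lie_form_rotate[of \<phi> x y z]
        hom_lie_form_rotate[of \<phi> y z x] by auto
    then have "hom_lie_form \<phi> x y z = 0" if "x \<in> A \<union> B" "y \<in> A \<union> B" "z \<in> A \<union> B" for x y z
      using that by blast
    moreover have "\<forall>v. \<exists>a\<in>A. \<exists>b\<in>B. v = a + b"
      using complementary_subspaces_fixed_points_kernel[OF lin idem]
      by (simp add: A_def B_def complementary_subspaces_def)
    ultimately show "hom_lie_structure scale br \<phi>"
      using hom_lie_form_eq_0_if_eq_0_on_summands[OF lin] by (simp add: hom_lie_structure_iff_form lin)
  qed
qed

lemma exists_nontrivial_idempotent_hom_lie_structure_iff: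
  "(\<exists>\<phi>. hom_lie_structure scale br \<phi> \<and> \<phi> \<circ> \<phi> = \<phi> \<and> \<phi> \<noteq> (\<lambda>x. 0) \<and> \<phi> \<noteq> id) \<longleftrightarrow>
   (\<exists>A B. complementary_subspaces A B \<and> A \<noteq> {0} \<and> B \<noteq> {0} \<and>
      (\<forall>x\<in>A. \<forall>y\<in>A. \<forall>z\<in>B. br (br x y) z = 0) \<and> (\<forall>x\<in>B. \<forall>y\<in>B. \<forall>z\<in>A. br (br x y) z = 0))"
  (is "(\<exists>\<phi>. ?hom_lie \<phi>) \<longleftrightarrow> (\<exists>A B. ?splitting A B)")
proof
  assume "\<exists>\<phi>. ?hom_lie \<phi>"
  then obtain \<phi> where hom: "hom_lie_structure scale br \<phi>" and idem: "\<phi> \<circ> \<phi> = \<phi>"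
    and nonzero: "\<phi> \<noteq> (\<lambda>x. 0)" and non_id: "\<phi> \<noteq> id"
    by blast
  have lin: "Vector_Spaces.linear scale scale \<phi>"
    using hom by (simp add: hom_lie_structure_def)
  have "complementary_subspaces {x. \<phi> x = x} {x. \<phi> x = 0}"
    by (rule complementary_subspaces_fixed_points_kernel[OF lin idem])
  moreover have "{x. \<phi> x = x} \<noteq> {0}"
    using fixed_points_eq_zero_iff[OF idem] nonzero by blast
  moreover have "{x. \<phi> x = 0} \<noteq> {0}"
    using kernel_eq_zero_iff_id[OF lin idem] non_id by blast
  moreover note hom_lie_structure_idempotent_iff[OF lin idem, THEN iffD1, OF hom]
  ultimately show "\<exists>A B. ?splitting A B"
    by blast
next
  assume "\<exists>A B. ?splitting A B"
  then obtain A B where splitting: "?splitting A B"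
    by blast
  then obtain p where lin: "Vector_Spaces.linear scale scale p" and idem: "p \<circ> p = p"
    and fixed: "{x. p x = x} = A" and kernel: "{x. p x = 0} = B"
    using complementary_subspaces_projection by blast
  have "hom_lie_structure scale br p"
    using hom_lie_structure_idempotent_iff[OF lin idem] splitting by (simp add: fixed kernel)
  moreover have "p \<noteq> (\<lambda>x. 0)"
    using fixed_points_eq_zero_iff[OF idem] splitting by (simp add: fixed)
  moreover have "p \<noteq> id"
    using kernel_eq_zero_iff_id[OF lin idem] splitting by (simp add: kernel)
  ultimately show "\<exists>\<phi>. ?hom_lie \<phi>"
    using idem by blast
qed

end

theorem lemma2p2:
  fixes scale :: "'k::field \<Rightarrow> 'v::ab_group_add \<Rightarrow> 'v"
    and br :: "'v \<Rightarrow> 'v \<Rightarrow> 'v"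
  assumes "lie_algebra scale br"
    and "finite_dim scale"
    and "(2::'k) \<noteq> 0"
  shows "(\<exists>\<phi>. hom_lie_structure scale br \<phi> \<and> \<phi> \<circ> \<phi> = \<phi> \<and> \<phi> \<noteq> (\<lambda>x. 0) \<and> \<phi> \<noteq> id)
     \<longleftrightarrow> (\<exists>A B. module.subspace scale A \<and> module.subspace scale B \<and>
                A \<inter> B = {0} \<and> (\<forall>v. \<exists>a\<in>A. \<exists>b\<in>B. v = a + b) \<and>
                A \<noteq> {0} \<and> B \<noteq> {0} \<and>
                lie_bracket_set scale br (lie_bracket_set scale br A A) B = {0} \<and>
                lie_bracket_set scale br (lie_bracket_set scale br B B) A = {0})"
proof -
  interpret lie_alg scale br
    by (rule lie_alg.intro) fact
  show ?thesis
    using exists_nontrivial_idempotent_hom_lie_structure_iff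
    unfolding lie_bracket_set_bracket_eq_zero_iff complementary_subspaces_def
    by simp
qed

end
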